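(* Suppose $(\mu^{(n)}_t,\nu^{(n)}_t)_{t\ge0}$, $n\in\mathbb N$, are processes in $D_{[0,\infty)}(\mathcal M_{\mathrm{tem}}(\mathbb R)^2)$ (resp. $D_{[0,\infty)}(\mathcal M_{\mathrm{rap}}(\mathbb R)^2)$) converging weakly, with respect to the Meyer–Zheng topology, to $(\mu_t,\nu_t)_{t\ge0}$, and suppose that $\mathbb P[R(\mu^{(n)}_t)\le L(\nu^{(n)}_t)\text{ for all }t>0,n\in\mathbb N]=1$. Then $\mathbb P[R(\mu_t)\le L(\nu_t)\text{ for all }t>0]=1$.
   Context: $\phi_\lambda(x)=e^{-\lambda|x|}$. $\mathcal M_{\mathrm{tem}}(\mathbb R)$: nonnegative Radon measures with $\int\phi_\lambda d\mu<\infty$ for all $\lambda>0$, with $\mu_n\to\mu$ iff $\int\varphi d\mu_n\to\int\varphi d\mu$ for every continuous $\varphi$ with, for some $\lambda>0$, $\sup|\varphi|/\phi_\lambda<\infty$ and $\varphi/\phi_\lambda$ having finite limits at $\pm\infty$; $\mathcal M_{\mathrm{rap}}(\mathbb R)$: those with $\int\phi_{-\lambda}d\mu<\infty$ for all $\lambda>0$, with $\mu_n\to\mu$ iff weak convergence and $\sup_n\int\phi_{-\lambda}d\mu_n<\infty$ for all $\lambda>0$. $D_{[0,\infty)}(E)$ is the space of càdlàg paths; the Meyer–Zheng topology on it is induced by weak convergence of pseudo-paths (the images of $e^{-t}dt$ under $t\mapsto(t,w(t))$), equivalently convergence in Lebesgue measure. ${\rm supp}(\mu)=\{x:\mu(B_\varepsilon(x))>0\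 \forall\varepsilon>0\}$, $R(\mu)=\sup{\rm supp}(\mu)$, $L(\mu)=\inf{\rm supp}(\mu)$ in $\bar{\mathbb R}$. *)

theory Defs
  imports "HOL-Probability.Probability"
begin

definition phi :: "real \<Rightarrow> real \<Rightarrow> real" where
  "phi lam x = exp (- lam * \<bar>x\<bar>)"

definition seq_topology :: "'a set \<Rightarrow> ((nat \<Rightarrow> 'a) \<Rightarrow> 'a \<Rightarrow> bool) \<Rightarrow> 'a topology" where
  "seq_topology S conv = topology (\<lambda>U. U \<subseteq> S \<and>
     (\<forall>x\<in>U. \<forall>s. (\<forall>n. s n \<in> S) \<longrightarrow> conv s x \<longrightarrow> eventually (\<lambda>n. s n \<in> U) sequentially))"

definition borel_of :: "'a topology \<Rightarrow> 'a measure" where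
  "borel_of X = sigma (topspace X) {U. openin X U}"

definition radon_measure :: "real measure \<Rightarrow> bool" where
  "radon_measure \<mu> \<longleftrightarrow> sets \<mu> = sets borel \<and> (\<forall>K. compact K \<longrightarrow> emeasure \<mu> K < \<infinity>)"

definition Mtem :: "real measure set" where
  "Mtem = {\<mu>. radon_measure \<mu> \<and> (\<forall>lam>0. (\<integral>\<^sup>+ x. ennreal (phi lam x) \<partial>\<mu>) < \<infinity>)}"

definition Mrap :: "real measure set" where
  "Mrap = {\<mu>. radon_measure \<mu> \<and> (\<forall>lam>0. (\<integral>\<^sup>+ x. ennreal (phi (- lam) x) \<partial>\<mu>) < \<infinity>)}"

definition tem_test :: "(real \<Rightarrow> real) \<Rightarrow> bool" where
  "tem_test f \<longleftrightarrow> continuous_on UNIV f \<and>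
     (\<exists>lam>0. (\<exists>C. \<forall>x. \<bar>f x\<bar> / phi lam x \<le> C) \<and>
              (\<exists>a. ((\<lambda>x. f x / phi lam x) \<longlongrightarrow> a) at_top) \<and>
              (\<exists>b. ((\<lambda>x. f x / phi lam x) \<longlongrightarrow> b) at_bot))"

definition tem_conv :: "(nat \<Rightarrow> real measure) \<Rightarrow> real measure \<Rightarrow> bool" where
  "tem_conv \<mu>s \<mu> \<longleftrightarrow> (\<forall>f. tem_test f \<longrightarrow>
     (\<lambda>n. \<integral>x. f x \<partial>(\<mu>s n)) \<longlonglongrightarrow> (\<integral>x. f x \<partial>\<mu>))"

definition weak_conv_meas :: "(nat \<Rightarrow> real measure) \<Rightarrow> real measure \<Rightarrow> bool" where
  "weak_conv_meas \<mu>s \<mu> \<longleftrightarrow> (\<forall>f::real\<Rightarrow>real. continuous_on UNIV f \<longrightarrow> bounded (range f) \<longrightarrow>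
     (\<lambda>n. \<integral>x. f x \<partial>(\<mu>s n)) \<longlonglongrightarrow> (\<integral>x. f x \<partial>\<mu>))"

definition rap_conv :: "(nat \<Rightarrow> real measure) \<Rightarrow> real measure \<Rightarrow> bool" where
  "rap_conv \<mu>s \<mu> \<longleftrightarrow> weak_conv_meas \<mu>s \<mu> \<and>
     (\<forall>lam>0. \<exists>B. \<forall>n. (\<integral>\<^sup>+ x. ennreal (phi (- lam) x) \<partial>(\<mu>s n)) \<le> B \<and> B < \<infinity>)"

definition tem_topology :: "real measure topology" where
  "tem_topology = seq_topology Mtem tem_conv"

definition rap_topology :: "real measure topology" where
  "rap_topology = seq_topology Mrap rap_conv"

definition cadlag_paths :: "'a topology \<Rightarrow> (real \<Rightarrow> 'a) set" where
  "cadlag_paths E = {w. (\<forall>t\<ge>0. w t \<in> topspace E) \<and> (\<forall>t<0. w t = undefined) \<and>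
      (\<forall>t\<ge>0. limitin E w (w t) (at_right t)) \<and>
      (\<forall>t>0. \<exists>l. limitin E w l (at_left t))}"

text \<open>Weak convergence of pseudo-paths: the pseudo-path of w is the image of
  e^{-t} dt on [0,\<infinity>) under t \<mapsto> (t, w t); its integral against f is written out.\<close>

definition pseudo_path_conv :: "'a topology \<Rightarrow> (nat \<Rightarrow> real \<Rightarrow> 'a) \<Rightarrow> (real \<Rightarrow> 'a) \<Rightarrow> bool" where
  "pseudo_path_conv E ws w \<longleftrightarrow>
     (\<forall>f. continuous_map (prod_topology (top_of_set {0..}) E) euclideanreal f \<longrightarrow>
          (\<exists>C. \<forall>p\<in>topspace (prod_topology (top_of_set {0..}) E). \<bar>f p\<bar> \<le> C) \<longrightarrow>
          (\<lambda>n. LINT t:{0..}|lborel. exp (- t) * f (t, ws n t))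
            \<longlonglongrightarrow> (LINT t:{0..}|lborel. exp (- t) * f (t, w t)))"

definition MZ_topology :: "'a topology \<Rightarrow> (real \<Rightarrow> 'a) topology" where
  "MZ_topology E = seq_topology (cadlag_paths E) (pseudo_path_conv E)"

definition weak_conv_laws :: "'a topology \<Rightarrow> (nat \<Rightarrow> 'a measure) \<Rightarrow> 'a measure \<Rightarrow> bool" where
  "weak_conv_laws X Ps P \<longleftrightarrow>
     (\<forall>f. continuous_map X euclideanreal f \<longrightarrow> (\<exists>C. \<forall>x\<in>topspace X. \<bar>f x\<bar> \<le> C) \<longrightarrow>
          (\<lambda>n. \<integral>x. f x \<partial>(Ps n)) \<longlonglongrightarrow> (\<integral>x. f x \<partial>P))"

definition supp :: "real measure \<Rightarrow> real set" where
  "supp \<mu> = {x. \<forall>e>0. emeasure \<mu> (ball x e) > 0}"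

definition Rsupp :: "real measure \<Rightarrow> ereal" where
  "Rsupp \<mu> = Sup (ereal ` supp \<mu>)"

definition Lsupp :: "real measure \<Rightarrow> ereal" where
  "Lsupp \<mu> = Inf (ereal ` supp \<mu>)"

end

theory Submission
  imports Defs
begin

text \<open>For reals b < a let k(a,b)(\<mu>, \<nu>) be the product of the clipped integrals of \<mu>
  against a tent around a and of \<nu> against a tent around b, both of radius (a - b)/3.
  Tents are admissible test functions, so k(a,b) is bounded and continuous; it vanishes when
  R(\<mu>) \<le> L(\<nu>), and if R(\<mu>) > L(\<nu>) it is positive for some rationals a, b. Hence
  G(a,b)(w), the integral of exp(-t) k(a,b)(w t) over t \<ge> 0, is a bounded nonnegative
  functional on paths, continuous for the Meyer--Zheng topology, which vanishes almost surely
  under every P(n). By weak convergence its P-expectation is 0, so G(a,b) = 0 P-a.s.,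
  simultaneously for all rational a, b. For a cadlag path, G(a,b)(w) = 0 forces
  k(a,b)(w t) = 0 at every t by right continuity, and this orders the supports at every time.\<close>

lemma istopology_seq_topology:
  "istopology (\<lambda>U. U \<subseteq> S \<and>
     (\<forall>x\<in>U. \<forall>s. (\<forall>n. s n \<in> S) \<longrightarrow> conv s x \<longrightarrow> eventually (\<lambda>n. s n \<in> U) sequentially))"
  (is "istopology ?open")
proof -
  have "?open (U \<inter> V)" if "?open U" "?open V" for U V
    using that by (auto simp: eventually_conj)
  moreover have "?open (\<Union>\<K>)" if "\<forall>U\<in>\<K>. ?open U" for \<K>
  proof -
    have "eventually (\<lambda>n. s n \<in> \<Union>\<K>) sequentially"
      if "x \<in> U" "U \<in> \<K>" "\<forall>n. s n \<in> S" "conv s x" for x U s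
      using that \<open>\<forall>U\<in>\<K>. ?open U\<close> by (blast intro: eventually_mono)
    then show ?thesis using that by blast
  qed
  ultimately show ?thesis unfolding istopology_def by blast
qed

lemma openin_seq_topology:
  "openin (seq_topology S conv) U \<longleftrightarrow> U \<subseteq> S \<and>
     (\<forall>x\<in>U. \<forall>s. (\<forall>n. s n \<in> S) \<longrightarrow> conv s x \<longrightarrow> eventually (\<lambda>n. s n \<in> U) sequentially)"
  unfolding seq_topology_def topology_inverse'[OF istopology_seq_topology] by (rule refl)

lemma topspace_seq_topology [simp]: "topspace (seq_topology S conv) = S"
proof -
  have "openin (seq_topology S conv) S" by (simp add: openin_seq_topology)
  then show ?thesis using openin_subset by (auto simp: openin_seq_topology topspace_def)
qed

lemma continuous_map_seq_topology:
  fixes G :: "'a \<Rightarrow> 'b::topological_space"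
  assumes "\<And>s x. (\<forall>n. s n \<in> S) \<Longrightarrow> x \<in> S \<Longrightarrow> conv s x \<Longrightarrow> (\<lambda>n. G (s n)) \<longlonglongrightarrow> G x"
  shows "continuous_map (seq_topology S conv) euclidean G"
  unfolding continuous_map_def topspace_seq_topology
proof (intro conjI allI impI)
  fix U :: "'b set" assume "openin euclidean U"
  then show "openin (seq_topology S conv) {x \<in> S. G x \<in> U}"
    unfolding openin_seq_topology
    using topological_tendstoD[OF assms] by (fastforce elim: eventually_mono)
qed simp

lemma space_borel_of [simp]: "space (borel_of T) = topspace T"
  unfolding borel_of_def by (rule space_measure_of) (auto dest: openin_subset)

lemma sets_borel_of: "sets (borel_of T) = sigma_sets (topspace T) {U. openin T U}"
  unfolding borel_of_def by (rule sets_measure_of) (auto dest: openin_subset)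

lemma borel_measurable_borel_of:
  fixes f :: "'a \<Rightarrow> 'b::topological_space"
  assumes "continuous_map T euclidean f"
  shows "f \<in> borel_measurable (borel_of T)"
proof (rule borel_measurableI)
  fix S :: "'b set" assume "open S"
  then have "openin T {x \<in> topspace T. f x \<in> S}"
    using openin_continuous_map_preimage[OF assms] by simp
  moreover have "f -` S \<inter> space (borel_of T) = {x \<in> topspace T. f x \<in> S}" by auto
  ultimately show "f -` S \<inter> space (borel_of T) \<in> sets (borel_of T)"
    unfolding sets_borel_of by auto
qed

lemma AE_eq_0_if_weak_conv_laws:
  assumes conv: "weak_conv_laws T Ps P" and P: "prob_space P"
    and sets_P: "sets P = sets (borel_of T)"
    and f: "continuous_map T euclideanreal f"
    and f_nonneg: "\<And>x. x \<in> topspace T \<Longrightarrow> 0 \<le> f x"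
    and f_le: "\<And>x. x \<in> topspace T \<Longrightarrow> f x \<le> C"
    and zero: "\<And>n. AE x in Ps n. f x = 0"
  shows "AE x in P. f x = 0"
proof -
  interpret prob_space P by (fact P)
  have space_P: "space P = topspace T"
    using sets_eq_imp_space_eq[OF sets_P] by simp
  have "(\<lambda>n. \<integral>x. f x \<partial>Ps n) \<longlonglongrightarrow> (\<integral>x. f x \<partial>P)"
  proof -
    have "\<forall>x\<in>topspace T. \<bar>f x\<bar> \<le> C" using f_nonneg f_le by auto
    then show ?thesis using conv f unfolding weak_conv_laws_def by blast
  qed
  moreover have "(\<integral>x. f x \<partial>Ps n) = 0" for n
    using zero by (rule integral_eq_zero_AE)
  ultimately have "(\<integral>x. f x \<partial>P) = 0"
    by (simp add: LIMSEQ_const_iff)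
  moreover have "integrable P f"
  proof (rule integrable_const_bound[where B = C])
    show "f \<in> borel_measurable P"
      using borel_measurable_borel_of[OF f] by (simp add: measurable_cong_sets[OF sets_P refl])
  qed (use f_nonneg f_le space_P in auto)
  ultimately show ?thesis
    using integral_nonneg_eq_0_iff_AE[of P f] f_nonneg space_P by auto
qed

lemma emeasure_eq_0_if_disjoint_supp:
  assumes sets_\<mu>: "sets \<mu> = sets borel" and disj: "U \<inter> supp \<mu> = {}"
  shows "emeasure \<mu> U = 0"
proof -
  define B :: "rat \<times> rat \<Rightarrow> real set" where "B q = ball (of_rat (fst q)) (of_rat (snd q))" for q
  define N where "N = (\<Union>q\<in>{q. emeasure \<mu> (B q) = 0}. B q)"
  have N_null: "N \<in> null_sets \<mu>"
    unfolding N_def by (rule null_sets_UN') (auto simp: B_def sets_\<mu> null_sets_def)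
  have "U \<subseteq> N"
  proof
    fix x assume "x \<in> U"
    then have "x \<notin> supp \<mu>" using disj by auto
    then obtain e where e: "e > 0" "emeasure \<mu> (ball x e) = 0"
      unfolding supp_def by (auto simp: not_less)
    obtain c where c: "x - e/3 < of_rat c" "of_rat c < x"
      using of_rat_dense[of "x - e/3" x] e by auto
    obtain r where r: "e/3 < of_rat r" "of_rat r < 2*e/3"
      using of_rat_dense[of "e/3" "2*e/3"] e by auto
    have "B (c, r) \<subseteq> ball x e" "x \<in> B (c, r)"
      using c r by (auto simp: B_def dist_real_def)
    moreover from this have "emeasure \<mu> (B (c, r)) = 0"
      using e emeasure_mono[of "B (c, r)" "ball x e" \<mu>] by (simp add: sets_\<mu>)
    ultimately show "x \<in> N" unfolding N_def by blast
  qed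
  then show ?thesis
    using N_null by (metis emeasure_mono le_zero_eq null_setsD1 null_setsD2)
qed

lemma supp_nonzero_if_integral_nonzero:
  assumes sets_\<mu>: "sets \<mu> = sets borel" and f: "continuous_on UNIV f"
    and "(\<integral>z. f z \<partial>\<mu>) \<noteq> (0::real)"
  obtains z where "z \<in> supp \<mu>" "f z \<noteq> 0"
proof -
  have U: "open {z. f z \<noteq> 0}" using open_Collect_neq[OF f continuous_on_const] by simp
  have "emeasure \<mu> {z. f z \<noteq> 0} \<noteq> 0"
  proof
    assume "emeasure \<mu> {z. f z \<noteq> 0} = 0"
    then have "AE z in \<mu>. f z = 0"
      using U by (intro AE_I'[of "{z. f z \<noteq> 0}"]) (auto simp: null_sets_def sets_\<mu>)
    then show False using assms(3) integral_eq_zero_AE by blast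
  qed
  then show ?thesis
    using emeasure_eq_0_if_disjoint_supp[OF sets_\<mu>, of "{z. f z \<noteq> 0}"] that by blast
qed

definition tent :: "real \<Rightarrow> real \<Rightarrow> real \<Rightarrow> real" where
  "tent a r z = max 0 (r - \<bar>z - a\<bar>)"

lemma continuous_on_tent: "continuous_on UNIV (tent a r)"
  unfolding tent_def by (intro continuous_intros)

lemma tent_nonneg: "0 \<le> tent a r z"
  by (simp add: tent_def)

lemma tent_le: "tent a r z \<le> \<bar>r\<bar>"
  by (simp add: tent_def)

lemma tent_le_indicator: "tent a r z \<le> \<bar>r\<bar> * indicator (cball a \<bar>r\<bar>) z"
  by (auto simp: tent_def indicator_def dist_real_def abs_minus_commute)

lemma tent_nonzero_iff: "tent a r z \<noteq> 0 \<longleftrightarrow> \<bar>z - a\<bar> < r"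
  by (auto simp: tent_def)

lemma tem_test_tent: "tem_test (tent a r)"
proof -
  have bound: "\<bar>tent a r x\<bar> / phi 1 x \<le> \<bar>r\<bar> * exp (\<bar>a\<bar> + \<bar>r\<bar>)" for x
  proof (cases "\<bar>x - a\<bar> < r")
    case True
    then have "exp \<bar>x\<bar> \<le> exp (\<bar>a\<bar> + \<bar>r\<bar>)" by simp
    then have "tent a r x * exp \<bar>x\<bar> \<le> \<bar>r\<bar> * exp (\<bar>a\<bar> + \<bar>r\<bar>)"
      by (intro mult_mono tent_le tent_nonneg) auto
    then show ?thesis by (simp add: phi_def tent_nonneg exp_minus field_simps)
  qed (simp add: tent_def)
  have "eventually (\<lambda>x. tent a r x / phi 1 x = 0) at_top"
    using eventually_ge_at_top[of "\<bar>a\<bar> + \<bar>r\<bar>"] by eventually_elim (auto simp: tent_def)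
  moreover have "eventually (\<lambda>x. tent a r x / phi 1 x = 0) at_bot"
    using eventually_le_at_bot[of "- \<bar>a\<bar> - \<bar>r\<bar>"] by eventually_elim (auto simp: tent_def)
  ultimately have "((\<lambda>x. tent a r x / phi 1 x) \<longlongrightarrow> 0) at_top"
    "((\<lambda>x. tent a r x / phi 1 x) \<longlongrightarrow> 0) at_bot"
    by (auto intro: tendsto_eventually)
  then show ?thesis
    unfolding tem_test_def using continuous_on_tent bound zero_less_one by blast
qed

lemma bounded_range_tent: "bounded (range (tent a r))"
  using tent_le tent_nonneg by (intro boundedI[of _ "\<bar>r\<bar>"]) auto

lemma integrable_tent:
  assumes "radon_measure \<mu>"
  shows "integrable \<mu> (tent a r)"
proof (rule Bochner_Integration.integrable_bound)
  have sets_\<mu>: "sets \<mu> = sets borel" and "emeasure \<mu> (cball a \<bar>r\<bar>) < \<infinity>"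
    using assms by (auto simp: radon_measure_def)
  then show "integrable \<mu> (\<lambda>z. \<bar>r\<bar> * indicator (cball a \<bar>r\<bar>) z)"
    by (intro integrable_mult_right integrable_real_indicator) auto
  show "tent a r \<in> borel_measurable \<mu>"
    using continuous_on_tent by (simp add: measurable_cong_sets[OF sets_\<mu> refl] borel_measurable_continuous_onI)
qed (auto simp: tent_le_indicator tent_nonneg)

text \<open>The tent dominates a small indicator around any point where it is positive.\<close>

lemma integral_tent_pos:
  assumes radon: "radon_measure \<mu>" and x: "x \<in> supp \<mu>" and pos: "tent a r x > 0"
  shows "(\<integral>z. tent a r z \<partial>\<mu>) > 0"
proof -
  have sets_\<mu>: "sets \<mu> = sets borel" using radon by (simp add: radon_measure_def)
  define c where "c = tent a r x / 2"
  have c: "c > 0" using pos by (simp add: c_def)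
  have below: "c * indicator (ball x c) z \<le> tent a r z" for z
  proof (cases "z \<in> ball x c")
    case True
    then have "\<bar>z - a\<bar> \<le> \<bar>x - a\<bar> + c" by (auto simp: dist_real_def)
    moreover have "c = (r - \<bar>x - a\<bar>) / 2" using pos by (simp add: c_def tent_def)
    ultimately have "c \<le> r - \<bar>z - a\<bar>" by argo
    then have "c \<le> tent a r z" by (simp add: tent_def)
    then show ?thesis using True by simp
  qed (simp add: tent_nonneg)
  have "emeasure \<mu> (ball x c) \<le> emeasure \<mu> (cball x c)"
    by (rule emeasure_mono) (auto simp: sets_\<mu>)
  also have "\<dots> < \<infinity>" using radon by (simp add: radon_measure_def)
  finally have finite: "emeasure \<mu> (ball x c) < \<infinity>" .
  have "0 < c * measure \<mu> (ball x c)"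
    using c x finite by (simp add: supp_def measure_def enn2real_positive_iff)
  also have "\<dots> = (\<integral>z. c * indicator (ball x c) z \<partial>\<mu>)"
    using sets_\<mu> by (simp add: sets_eq_imp_space_eq)
  also have "\<dots> \<le> (\<integral>z. tent a r z \<partial>\<mu>)"
    using finite below integrable_tent[OF radon]
    by (intro integral_mono integrable_mult_right integrable_real_indicator) (auto simp: sets_\<mu>)
  finally show ?thesis .
qed

definition clip :: "real \<Rightarrow> real" where
  "clip x = min 1 (max 0 x)"

text \<open>For \<open>b < a\<close> the tents around \<open>a\<close> and \<open>b\<close> of radius \<open>(a - b)/3\<close> have disjoint supports,
  the first lying to the right of the second.\<close>

definition crossing :: "real \<Rightarrow> real \<Rightarrow> real measure \<times> real measure \<Rightarrow> real" where
  "crossing a b p = clip (\<integral>z. tent a ((a - b) / 3) z \<partial>fst p) * clip (\<integral>z. tent b ((a - b) / 3) z \<partial>snd p)"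

lemma crossing_nonneg: "0 \<le> crossing a b p"
  by (simp add: crossing_def clip_def)

lemma crossing_le_1: "crossing a b p \<le> 1"
  unfolding crossing_def clip_def by (auto intro: mult_le_one)

lemma crossing_eq_0_if_supp_ordered:
  assumes "sets \<mu> = sets borel" "sets \<nu> = sets borel" and ordered: "Rsupp \<mu> \<le> Lsupp \<nu>"
  shows "crossing a b (\<mu>, \<nu>) = 0"
proof (rule ccontr)
  define r where "r = (a - b) / 3"
  assume "crossing a b (\<mu>, \<nu>) \<noteq> 0"
  then have "(\<integral>z. tent a r z \<partial>\<mu>) \<noteq> 0" "(\<integral>z. tent b r z \<partial>\<nu>) \<noteq> 0"
    by (auto simp: crossing_def clip_def r_def)
  then obtain x y where "x \<in> supp \<mu>" "\<bar>x - a\<bar> < r" "y \<in> supp \<nu>" "\<bar>y - b\<bar> < r"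
    using supp_nonzero_if_integral_nonzero[OF assms(1) continuous_on_tent]
      supp_nonzero_if_integral_nonzero[OF assms(2) continuous_on_tent]
    by (metis tent_nonzero_iff)
  moreover from this have "y < x" unfolding r_def by argo
  ultimately have "Lsupp \<nu> \<le> ereal y" "ereal y < ereal x" "ereal x \<le> Rsupp \<mu>"
    unfolding Lsupp_def Rsupp_def by (auto intro: Inf_lower Sup_upper)
  then have "Lsupp \<nu> < Rsupp \<mu>" by (meson le_less_trans less_le_trans)
  with ordered show False by simp
qed

lemma ex_crossing_pos_if_not_supp_ordered:
  assumes "radon_measure \<mu>" "radon_measure \<nu>" and crossed: "\<not> Rsupp \<mu> \<le> Lsupp \<nu>"
  shows "\<exists>a\<in>\<rat>. \<exists>b\<in>\<rat>. crossing a b (\<mu>, \<nu>) > 0"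
proof -
  obtain x where x: "x \<in> supp \<mu>" "Lsupp \<nu> < ereal x"
    using crossed unfolding Rsupp_def by (auto simp: not_le less_Sup_iff)
  then obtain y where y: "y \<in> supp \<nu>" "y < x"
    unfolding Lsupp_def by (auto simp: Inf_less_iff)
  obtain a where a: "x - (x - y)/6 < of_rat a" "of_rat a < x"
    using of_rat_dense[of "x - (x - y)/6" x] y by auto
  obtain b where b: "y < of_rat b" "of_rat b < y + (x - y)/6"
    using of_rat_dense[of y "y + (x - y)/6"] y by auto
  define r :: real where "r = (of_rat a - of_rat b) / 3"
  have "\<bar>x - of_rat a\<bar> < r" "\<bar>y - of_rat b\<bar> < r"
    using a b by (simp_all add: r_def abs_less_iff field_simps)
  then have "tent (of_rat a) r x > 0" "tent (of_rat b) r y > 0"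
    by (simp_all add: tent_def)
  then have "crossing (of_rat a) (of_rat b) (\<mu>, \<nu>) > 0"
    using integral_tent_pos[OF assms(1) x(1)] integral_tent_pos[OF assms(2) y(1)]
    by (simp add: crossing_def clip_def r_def)
  then show ?thesis using Rats_of_rat by blast
qed

lemma set_integrable_exp_minus: "set_integrable lborel {0..} (\<lambda>t::real. exp (- t))"
proof -
  have "(\<lambda>t::real. exp (- 1 * t)) integrable_on {0..}"
    by (rule integrable_on_exp_minus_to_infinity) simp
  then have "(\<lambda>t::real. exp (- t)) absolutely_integrable_on {0..}"
    by (intro nonnegative_absolutely_integrable_1) auto
  then show ?thesis
    unfolding set_integrable_def by (simp add: integrable_completion)
qed

text \<open>Approximation from the right along dyadic grids.\<close>

lemma borel_measurable_right_continuous: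
  fixes g :: "real \<Rightarrow> real"
  assumes right_cont: "\<And>t. (g \<longlongrightarrow> g t) (at_right t)"
  shows "g \<in> borel_measurable borel"
proof (rule borel_measurable_LIMSEQ_real)
  define d :: "nat \<Rightarrow> real \<Rightarrow> real" where "d n t = (of_int \<lfloor>t * 2^n\<rfloor> + 1) / 2^n" for n t
  show "(\<lambda>n. g (d n t)) \<longlonglongrightarrow> g t" for t
  proof -
    have above: "t < d n t" for n
    proof -
      have "t * 2^n < of_int \<lfloor>t * 2^n\<rfloor> + 1" by linarith
      then show ?thesis by (simp add: d_def field_simps)
    qed
    have close: "d n t \<le> t + (1/2)^n" for n
    proof -
      have "of_int \<lfloor>t * 2^n\<rfloor> \<le> t * 2^n" by linarith
      then show ?thesis by (simp add: d_def field_simps power_divide)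
    qed
    have grid: "(\<lambda>n. t + (1/2::real)^n) \<longlonglongrightarrow> t"
      using tendsto_add[OF tendsto_const LIMSEQ_power_zero[of "1/2::real"], of t] by simp
    have "(\<lambda>n. d n t) \<longlonglongrightarrow> t"
      by (rule tendsto_sandwich[OF always_eventually always_eventually tendsto_const grid])
        (use above close less_imp_le in blast)+
    then have "filterlim (\<lambda>n. d n t) (at_right t) sequentially"
      using above by (intro tendsto_imp_filterlim_at_right) auto
    then show ?thesis by (rule filterlim_compose[OF right_cont])
  qed
  show "(\<lambda>t. g (d n t)) \<in> borel_measurable borel" for n
  proof -
    have "(\<lambda>t::real. \<lfloor>t * 2^n\<rfloor>) \<in> borel \<rightarrow>\<^sub>M count_space UNIV" by measurable
    then have "(\<lambda>t. (\<lambda>m::int. \<lambda>_::real. g ((of_int m + 1) / 2^n)) \<lfloor>t * 2^n\<rfloor> t) \<in> borel_measurable borel"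
      by (rule measurable_compose_countable[rotated]) simp
    then show ?thesis by (simp add: d_def)
  qed
qed

lemma exp_weighted_integral_nonneg:
  fixes g :: "real \<Rightarrow> real"
  assumes "\<And>t. 0 \<le> g t"
  shows "0 \<le> (LINT t:{0..}|lborel. exp (- t) * g t)"
  unfolding set_lebesgue_integral_def
  using assms by (intro Bochner_Integration.integral_nonneg) (auto simp: indicator_def)

lemma exp_weighted_integral_le:
  fixes g :: "real \<Rightarrow> real"
  assumes "\<And>t. 0 \<le> g t" "\<And>t. g t \<le> 1"
  shows "(LINT t:{0..}|lborel. exp (- t) * g t) \<le> (LINT t:{0..}|lborel. exp (- t))"
  using set_integrable_exp_minus assms unfolding set_lebesgue_integral_def set_integrable_def
  by (intro integral_mono') (auto simp: indicator_def mult_le_one)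

text \<open>If \<open>g t0 > 0\<close>, right continuity makes \<open>g\<close> positive on a whole interval to the right of
  \<open>t0\<close>, which would carry positive weighted integral.\<close>

lemma eq_0_if_exp_weighted_integral_eq_0:
  fixes g :: "real \<Rightarrow> real"
  assumes meas: "g \<in> borel_measurable borel" and nonneg: "\<And>t. 0 \<le> g t" and le: "\<And>t. g t \<le> 1"
    and right_cont: "(g \<longlongrightarrow> g t0) (at_right t0)" and "0 \<le> t0"
    and zero: "(LINT t:{0..}|lborel. exp (- t) * g t) = 0"
  shows "g t0 = 0"
proof (rule ccontr)
  define h where "h t = indicator {0..} t * (exp (- t) * g t)" for t :: real
  have h_nonneg: "0 \<le> h t" for t
    using nonneg by (simp add: h_def)
  have "integrable lborel h"
  proof (rule Bochner_Integration.integrable_bound)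
    show "integrable lborel (\<lambda>t::real. indicator {0..} t * exp (- t))"
      using set_integrable_exp_minus by (simp add: set_integrable_def)
    show "h \<in> borel_measurable lborel"
      unfolding h_def using meas by measurable
    show "AE t in lborel. norm (h t) \<le> norm (indicator {0..} t * exp (- t) :: real)"
      using nonneg le by (intro AE_I2) (simp add: h_def indicator_def mult_le_one)
  qed
  moreover have "integral\<^sup>L lborel h = 0"
    using zero unfolding h_def set_lebesgue_integral_def by simp
  ultimately have "AE t in lborel. h t = 0"
    using integral_nonneg_eq_0_iff_AE h_nonneg by blast
  then obtain N where N: "N \<in> null_sets lborel" "\<And>t. h t \<noteq> 0 \<Longrightarrow> t \<in> N"
    by (elim AE_E) (auto simp: null_sets_def)
  assume "g t0 \<noteq> 0"
  then have "eventually (\<lambda>t. g t > 0) (at_right t0)"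
    using nonneg[of t0] order_tendstoD(1)[OF right_cont] by simp
  then obtain s where s: "t0 < s" "\<And>t. t0 < t \<Longrightarrow> t < s \<Longrightarrow> g t > 0"
    unfolding eventually_at_right_field by auto
  have "{t0<..<s} \<subseteq> N"
  proof
    fix t assume "t \<in> {t0<..<s}"
    then have "h t > 0" using s \<open>0 \<le> t0\<close> by (simp add: h_def)
    then show "t \<in> N" using N(2) by simp
  qed
  then have "{t0<..<s} \<in> null_sets lborel"
    by (intro null_sets_subset[OF N(1)]) auto
  with s(1) show False by (simp add: null_sets_def)
qed

definition path_crossing :: "real \<Rightarrow> real \<Rightarrow> (real \<Rightarrow> real measure \<times> real measure) \<Rightarrow> real" where
  "path_crossing a b w = (LINT t:{0..}|lborel. exp (- t) * crossing a b (w t))"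

lemma path_crossing_nonneg: "0 \<le> path_crossing a b w"
  unfolding path_crossing_def by (intro exp_weighted_integral_nonneg crossing_nonneg)

lemma path_crossing_le: "path_crossing a b w \<le> (LINT t:{0..}|lborel. exp (- t))"
  unfolding path_crossing_def by (intro exp_weighted_integral_le crossing_nonneg crossing_le_1)

context
  fixes X :: "real measure topology"
  assumes X: "X = tem_topology \<or> X = rap_topology"
begin

lemma radon_measure_if_in_topspace: "\<mu> \<in> topspace X \<Longrightarrow> radon_measure \<mu>"
  using X by (auto simp: tem_topology_def rap_topology_def Mtem_def Mrap_def)

lemma continuous_map_integral_tent: "continuous_map X euclideanreal (\<lambda>\<mu>. \<integral>z. tent a r z \<partial>\<mu>)"
  using X
proof
  assume "X = tem_topology"
  then show ?thesis
    unfolding tem_topology_def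
    by (auto intro!: continuous_map_seq_topology simp: tem_conv_def tem_test_tent)
next
  assume "X = rap_topology"
  then show ?thesis
    unfolding rap_topology_def
    by (auto intro!: continuous_map_seq_topology
        simp: rap_conv_def weak_conv_meas_def continuous_on_tent bounded_range_tent)
qed

lemma continuous_map_crossing: "continuous_map (prod_topology X X) euclideanreal (crossing a b)"
proof -
  have "continuous_map (prod_topology X X) euclideanreal (\<lambda>p. \<integral>z. tent c r z \<partial>fst p)"
    "continuous_map (prod_topology X X) euclideanreal (\<lambda>p. \<integral>z. tent c r z \<partial>snd p)" for c r
    using continuous_map_compose[OF continuous_map_fst continuous_map_integral_tent]
      continuous_map_compose[OF continuous_map_snd continuous_map_integral_tent]
    by (simp_all add: o_def)
  then show ?thesis
    unfolding crossing_def clip_def by (intro continuous_intros)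
qed

lemma radon_measure_along_path:
  assumes "w \<in> cadlag_paths (prod_topology X X)" "0 \<le> t"
  shows "radon_measure (fst (w t))" "radon_measure (snd (w t))"
proof -
  have "w t \<in> topspace X \<times> topspace X" using assms by (simp add: cadlag_paths_def)
  then show "radon_measure (fst (w t))" "radon_measure (snd (w t))"
    by (auto intro: radon_measure_if_in_topspace)
qed

text \<open>At negative times, where paths are constantly \<open>undefined\<close>, right continuity is trivial.\<close>

lemma crossing_along_path_right_continuous:
  assumes w: "w \<in> cadlag_paths (prod_topology X X)"
  shows "((\<lambda>s. crossing a b (w s)) \<longlongrightarrow> crossing a b (w t)) (at_right t)"
proof (cases "0 \<le> t")
  case True
  then have "limitin (prod_topology X X) w (w t) (at_right t)"
    using w by (simp add: cadlag_paths_def)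
  then show ?thesis
    using continuous_map_limit[OF continuous_map_crossing] by (simp add: o_def)
next
  case False
  then have "eventually (\<lambda>s. crossing a b (w s) = crossing a b (w t)) (at_right t)"
    unfolding eventually_at_right_field using w by (intro exI[of _ 0]) (auto simp: cadlag_paths_def)
  then show ?thesis by (rule tendsto_eventually)
qed

lemma continuous_map_path_crossing:
  "continuous_map (MZ_topology (prod_topology X X)) euclideanreal (path_crossing a b)"
  unfolding MZ_topology_def
proof (rule continuous_map_seq_topology)
  fix ws w assume "pseudo_path_conv (prod_topology X X) ws w"
  then have conv: "\<And>f. continuous_map (prod_topology (top_of_set {0..}) (prod_topology X X)) euclideanreal f \<Longrightarrow>
      \<forall>p. \<bar>f p\<bar> \<le> 1 \<Longrightarrow>
      (\<lambda>n. LINT t:{0..}|lborel. exp (- t) * f (t, ws n t)) \<longlonglongrightarrow> (LINT t:{0..}|lborel. exp (- t) * f (t, w t))"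
    unfolding pseudo_path_conv_def by blast
  have "continuous_map (prod_topology (top_of_set {0..}) (prod_topology X X)) euclideanreal
      (\<lambda>p. crossing a b (snd p))"
    using continuous_map_compose[OF continuous_map_snd continuous_map_crossing] by (simp add: o_def)
  from conv[OF this] show "(\<lambda>n. path_crossing a b (ws n)) \<longlonglongrightarrow> path_crossing a b w"
    using crossing_nonneg crossing_le_1 by (simp add: path_crossing_def)
qed

lemma supp_ordered_iff_path_crossings_eq_0:
  assumes w: "w \<in> cadlag_paths (prod_topology X X)"
  shows "(\<forall>t>0. Rsupp (fst (w t)) \<le> Lsupp (snd (w t))) \<longleftrightarrow> (\<forall>a\<in>\<rat>. \<forall>b\<in>\<rat>. path_crossing a b w = 0)"
proof
  assume ordered: "\<forall>t>0. Rsupp (fst (w t)) \<le> Lsupp (snd (w t))"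
  have crossing_0: "crossing a b (w t) = 0" if "0 < t" for a b t
    using crossing_eq_0_if_supp_ordered[of "fst (w t)" "snd (w t)"] ordered that
      radon_measure_along_path[OF w, of t] by (simp add: radon_measure_def)
  have "AE t in lborel. indicator {0..} t * (exp (- t) * crossing a b (w t)) = 0" for a b
    using AE_lborel_singleton[of 0] by eventually_elim (auto simp: indicator_def crossing_0)
  then show "\<forall>a\<in>\<rat>. \<forall>b\<in>\<rat>. path_crossing a b w = 0"
    unfolding path_crossing_def set_lebesgue_integral_def by (simp add: integral_eq_zero_AE)
next
  assume zero: "\<forall>a\<in>\<rat>. \<forall>b\<in>\<rat>. path_crossing a b w = 0"
  show "\<forall>t>0. Rsupp (fst (w t)) \<le> Lsupp (snd (w t))"
  proof (intro allI impI)
    fix t :: real assume "0 < t"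
    have crossings_0: "crossing a b (w t) = 0" if "a \<in> \<rat>" "b \<in> \<rat>" for a b
    proof (rule eq_0_if_exp_weighted_integral_eq_0[where g = "\<lambda>s. crossing a b (w s)"])
      show "((\<lambda>s. crossing a b (w s)) \<longlongrightarrow> crossing a b (w t)) (at_right t)"
        by (rule crossing_along_path_right_continuous[OF w])
      show "(\<lambda>s. crossing a b (w s)) \<in> borel_measurable borel"
        by (rule borel_measurable_right_continuous[OF crossing_along_path_right_continuous[OF w]])
      show "(LINT s:{0..}|lborel. exp (- s) * crossing a b (w s)) = 0"
        using zero that unfolding path_crossing_def by blast
    qed (use \<open>0 < t\<close> crossing_nonneg crossing_le_1 in auto)
    show "Rsupp (fst (w t)) \<le> Lsupp (snd (w t))"
    proof (rule ccontr)
      assume "\<not> ?thesis"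
      then obtain a b where "a \<in> \<rat>" "b \<in> \<rat>" "crossing a b (w t) > 0"
        using ex_crossing_pos_if_not_supp_ordered radon_measure_along_path[OF w, of t] \<open>0 < t\<close>
        by (metis less_imp_le prod.collapse)
      with crossings_0 show False by simp
    qed
  qed
qed

end

theorem lemma5p3:
  fixes X :: "real measure topology"
    and Ps :: "nat \<Rightarrow> (real \<Rightarrow> real measure \<times> real measure) measure"
    and P :: "(real \<Rightarrow> real measure \<times> real measure) measure"
  assumes "X = tem_topology \<or> X = rap_topology"
    and "\<And>n. prob_space (Ps n)"
    and "\<And>n. sets (Ps n) = sets (borel_of (MZ_topology (prod_topology X X)))"
    and "\<And>n. space (Ps n) = topspace (MZ_topology (prod_topology X X))"
    and "prob_space P"
    and "sets P = sets (borel_of (MZ_topology (prod_topology X X)))"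
    and "space P = topspace (MZ_topology (prod_topology X X))"
    and "weak_conv_laws (MZ_topology (prod_topology X X)) Ps P"
    and "\<And>n. AE w in Ps n. \<forall>t>0. Rsupp (fst (w t)) \<le> Lsupp (snd (w t))"
  shows "AE w in P. \<forall>t>0. Rsupp (fst (w t)) \<le> Lsupp (snd (w t))"
proof -
  note ordered_iff = supp_ordered_iff_path_crossings_eq_0[OF assms(1)]
  have paths: "topspace (MZ_topology (prod_topology X X)) = cadlag_paths (prod_topology X X)"
    by (simp add: MZ_topology_def)
  have "AE w in P. path_crossing a b w = 0" if "a \<in> \<rat>" "b \<in> \<rat>" for a b
  proof (rule AE_eq_0_if_weak_conv_laws[OF assms(8,5,6) continuous_map_path_crossing[OF assms(1)]
        path_crossing_nonneg path_crossing_le])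
    show "AE w in Ps n. path_crossing a b w = 0" for n
      using assms(9)[of n] AE_space
    proof eventually_elim
      case (elim w)
      then have "w \<in> cadlag_paths (prod_topology X X)" using assms(4) paths by simp
      with elim(1) show ?case using ordered_iff that by blast
    qed
  qed
  then have "AE w in P. \<forall>a\<in>\<rat>. \<forall>b\<in>\<rat>. path_crossing a b w = 0"
    by (simp add: AE_ball_countable countable_rat)
  then show ?thesis
    using AE_space
  proof eventually_elim
    case (elim w)
    then have "w \<in> cadlag_paths (prod_topology X X)" using assms(7) paths by simp
    with elim(1) show ?case using ordered_iff by blast
  qed
qed

end
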